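(* For each $\otimes\in\{\mathrm{del},\mathrm{add},\mathrm{edit}\}$, $p\text{-}\textsc{RM}^{\otimes}_{\mathrm{basic}}(ae)\subseteq\mathrm{para}\text{-}\mathrm{AC}^0\subseteq\mathrm{para}\text{-}\mathrm{AC}^{0\uparrow}$.
   Context: A basic graph is $(V,E)$ with $E\subseteq V\times V$ symmetric and irreflexive. For $S\subseteq V\times V$, $\|S\|=|\{\{u,v\}:(u,v)\in S\}|$. For a first-order sentence $\phi$ over $\{E\}$, $p\text{-}\textsc{RM}^{\mathrm{edit}}_{\mathrm{basic}}(\phi)$: given a basic graph $(V,E)$ and parameter $k$, is there $S$ with $\|S\|\le k$ such that $(V,E\triangle S)$ is a basic graph satisfying $\phi$; del (resp. add) versions require $S\subseteq E$ (resp. $S\cap E=\emptyset$). $p\text{-}\textsc{RM}^{\otimes}_{\mathrm{basic}}(ae)$ is the class of these problems for sentences $\phi=\forall x\exists y\,\psi$ with $\psi$ quantifier-free. $\mathrm{para}\text{-}\mathrm{AC}^{0}$ (resp. $\mathrm{para}\text{-}\mathrm{AC}^{0\uparrow}$): parameterized problems decided by unbounded fan-in and/or/not circuit families $(C_{n,k})$ of size $f(k)n^{O(1)}$ and depth $O(1)$ (resp. $f(k)$), $f$ computable. *)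

theory Defs
  imports Main
begin

datatype recf = RZero | RSucc | RProj nat | RComp recf "recf list"
  | RPrim recf recf | RMu recf

inductive reval :: "recf \<Rightarrow> nat list \<Rightarrow> nat \<Rightarrow> bool" where
  zero: "reval RZero xs 0"
| succ: "reval RSucc (x # xs) (Suc x)"
| proj: "i < length xs \<Longrightarrow> reval (RProj i) xs (xs ! i)"
| comp: "list_all2 (\<lambda>g y. reval g xs y) gs ys \<Longrightarrow> reval f ys z \<Longrightarrow> reval (RComp f gs) xs z"
| prim0: "reval g xs y \<Longrightarrow> reval (RPrim g h) (0 # xs) y"
| primS: "reval (RPrim g h) (n # xs) y \<Longrightarrow> reval h (n # y # xs) z
          \<Longrightarrow> reval (RPrim g h) (Suc n # xs) z"
| mu: "reval f (n # xs) 0 \<Longrightarrow> (\<forall>m<n. \<exists>y. reval f (m # xs) (Suc y))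
       \<Longrightarrow> reval (RMu f) xs n"

definition computable :: "(nat \<Rightarrow> nat) \<Rightarrow> bool" where
  "computable f \<longleftrightarrow> (\<exists>r. \<forall>n. reval r [n] (f n))"

text \<open>A circuit is a list of gates in topological order; a gate may only refer to
  input bits (GIn) or to earlier gates.  The output gate is the last gate.\<close>

datatype gate = GIn nat | GNot nat | GAnd "nat list" | GOr "nat list"

fun gate_ok :: "nat \<Rightarrow> nat \<Rightarrow> gate \<Rightarrow> bool" where
  "gate_ok m i (GIn j) = (j < m)"
| "gate_ok m i (GNot j) = (j < i)"
| "gate_ok m i (GAnd js) = (\<forall>j\<in>set js. j < i)"
| "gate_ok m i (GOr js) = (\<forall>j\<in>set js. j < i)"

definition wf_circ :: "nat \<Rightarrow> gate list \<Rightarrow> bool" where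
  "wf_circ m C \<longleftrightarrow> C \<noteq> [] \<and> (\<forall>i<length C. gate_ok m i (C ! i))"

fun gval :: "bool list \<Rightarrow> bool list \<Rightarrow> gate \<Rightarrow> bool" where
  "gval w vs (GIn j) = w ! j"
| "gval w vs (GNot j) = (\<not> vs ! j)"
| "gval w vs (GAnd js) = (\<forall>j\<in>set js. vs ! j)"
| "gval w vs (GOr js) = (\<exists>j\<in>set js. vs ! j)"

definition circ_vals :: "bool list \<Rightarrow> gate list \<Rightarrow> bool list" where
  "circ_vals w C = foldl (\<lambda>vs g. vs @ [gval w vs g]) [] C"

definition circ_out :: "bool list \<Rightarrow> gate list \<Rightarrow> bool" where
  "circ_out w C = last (circ_vals w C)"

fun gdepth :: "nat list \<Rightarrow> gate \<Rightarrow> nat" where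
  "gdepth ds (GIn j) = 0"
| "gdepth ds (GNot j) = Suc (ds ! j)"
| "gdepth ds (GAnd js) = Suc (fold max (map (\<lambda>j. ds ! j) js) 0)"
| "gdepth ds (GOr js) = Suc (fold max (map (\<lambda>j. ds ! j) js) 0)"

definition circ_depth :: "gate list \<Rightarrow> nat" where
  "circ_depth C = fold max (foldl (\<lambda>ds g. ds @ [gdepth ds g]) [] C) 0"

definition circ_size :: "gate list \<Rightarrow> nat" where
  "circ_size C = length C"

type_synonym pproblem = "(bool list \<times> nat) set"

definition decides_family :: "(nat \<Rightarrow> nat \<Rightarrow> gate list) \<Rightarrow> pproblem \<Rightarrow> bool" where
  "decides_family C Q \<longleftrightarrow> (\<forall>n k. wf_circ n (C n k) \<and>
      (\<forall>w. length w = n \<longrightarrow> (circ_out w (C n k) \<longleftrightarrow> (w, k) \<in> Q)))"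

definition paraAC0 :: "pproblem set" where
  "paraAC0 = {Q. \<exists>C f (c::nat) (d::nat). computable f \<and> decides_family C Q \<and>
      (\<forall>n k. circ_size (C n k) \<le> f k * (n + 1) ^ c \<and> circ_depth (C n k) \<le> d)}"

definition paraAC0up :: "pproblem set" where
  "paraAC0up = {Q. \<exists>C f (c::nat) g. computable f \<and> computable g \<and> decides_family C Q \<and>
      (\<forall>n k. circ_size (C n k) \<le> f k * (n + 1) ^ c \<and> circ_depth (C n k) \<le> g k)}"

datatype fo = FEq nat nat | FE nat nat | FNot fo | FAnd fo fo | FOr fo fo
  | FAll nat fo | FEx nat fo

fun qfree :: "fo \<Rightarrow> bool" where
  "qfree (FEq x y) = True"
| "qfree (FE x y) = True"
| "qfree (FNot p) = qfree p"
| "qfree (FAnd p q) = (qfree p \<and> qfree q)"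
| "qfree (FOr p q) = (qfree p \<and> qfree q)"
| "qfree (FAll x p) = False"
| "qfree (FEx x p) = False"

fun fv :: "fo \<Rightarrow> nat set" where
  "fv (FEq x y) = {x, y}"
| "fv (FE x y) = {x, y}"
| "fv (FNot p) = fv p"
| "fv (FAnd p q) = fv p \<union> fv q"
| "fv (FOr p q) = fv p \<union> fv q"
| "fv (FAll x p) = fv p - {x}"
| "fv (FEx x p) = fv p - {x}"

fun holds :: "nat \<Rightarrow> (nat \<times> nat) set \<Rightarrow> (nat \<Rightarrow> nat) \<Rightarrow> fo \<Rightarrow> bool" where
  "holds n E a (FEq x y) = (a x = a y)"
| "holds n E a (FE x y) = ((a x, a y) \<in> E)"
| "holds n E a (FNot p) = (\<not> holds n E a p)"
| "holds n E a (FAnd p q) = (holds n E a p \<and> holds n E a q)"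
| "holds n E a (FOr p q) = (holds n E a p \<or> holds n E a q)"
| "holds n E a (FAll x p) = (\<forall>v<n. holds n E (a(x := v)) p)"
| "holds n E a (FEx x p) = (\<exists>v<n. holds n E (a(x := v)) p)"

definition models :: "nat \<Rightarrow> (nat \<times> nat) set \<Rightarrow> fo \<Rightarrow> bool" where
  "models n E \<phi> = holds n E (\<lambda>_. 0) \<phi>"

definition ae_sentence :: "fo \<Rightarrow> bool" where
  "ae_sentence \<phi> \<longleftrightarrow> (\<exists>x y \<psi>. \<phi> = FAll x (FEx y \<psi>) \<and> qfree \<psi> \<and> fv \<phi> = {})"

definition basic_graph :: "nat \<Rightarrow> (nat \<times> nat) set \<Rightarrow> bool" where
  "basic_graph n E \<longleftrightarrow> E \<subseteq> {0..<n} \<times> {0..<n} \<and> sym E \<and> irrefl E"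

definition enorm :: "(nat \<times> nat) set \<Rightarrow> nat" where
  "enorm S = card {{u, v} | u v. (u, v) \<in> S}"

text \<open>Adjacency-matrix encoding of the graph with vertex set {0..<n} as a bit string
  of length n*n (row-major).\<close>
definition graph_enc :: "nat \<Rightarrow> (nat \<times> nat) set \<Rightarrow> bool list" where
  "graph_enc n E = concat (map (\<lambda>i. map (\<lambda>j. (i, j) \<in> E) [0..<n]) [0..<n])"

datatype modop = Del | Add | Edit

definition op_ok :: "modop \<Rightarrow> (nat \<times> nat) set \<Rightarrow> (nat \<times> nat) set \<Rightarrow> bool" where
  "op_ok m E S = (case m of Del \<Rightarrow> S \<subseteq> E | Add \<Rightarrow> S \<inter> E = {} | Edit \<Rightarrow> True)"

definition RM_basic :: "modop \<Rightarrow> fo \<Rightarrow> pproblem" where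
  "RM_basic m \<phi> = {(graph_enc n E, k) | n E k. basic_graph n E \<and>
     (\<exists>S. S \<subseteq> {0..<n} \<times> {0..<n} \<and> enorm S \<le> k \<and> op_ok m E S \<and>
          basic_graph n (E - S \<union> (S - E)) \<and> models n (E - S \<union> (S - E)) \<phi>)}"

definition RM_basic_ae :: "modop \<Rightarrow> pproblem set" where
  "RM_basic_ae m = {RM_basic m \<phi> | \<phi>. ae_sentence \<phi>}"

end

theory Submission
  imports Defs Complex_Main "HOL-Library.Log_Nat" "HOL-Library.Discrete_Functions"
begin

text \<open>On loopless symmetric graphs a sentence \<open>\<forall>x \<exists>y \<psi>\<close> either depends only on the number
  \<open>N\<close> of vertices, or says that every vertex \<open>v\<close> has a partner \<open>u \<noteq> v\<close> whose adjacency to \<open>v\<close>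
  is a fixed truth value \<open>b\<close>.  In the first case the modification problem only asks whether
  the input is a graph.  In the second, an edited pair provides partners for at most its two
  endpoints, and pairing up the vertices without partner shows that this suffices: a solution
  exists iff no vertex lacks a partner, or edits of the allowed kind can create adjacency \<open>b\<close>,
  \<open>N \<ge> 2\<close> and at most \<open>2k\<close> vertices lack a partner.  "More than \<open>2k\<close>" is expressed by a
  formula of constant depth and size \<open>f(k) N\<^sup>4\<close> that guesses \<open>(2k+1)\<^sup>2\<close> bit positions below
  \<open>log N\<close> separating \<open>2k+1\<close> witnesses.  Formulas compile into circuits of the same size and
  depth, and a constant depth bound is in particular a computable one.\<close>

section \<open>Formulas and their compilation into circuits\<close>

datatype form = BIn nat | BNot form | BAnd "form list" | BOr "form list"

fun feval :: "bool list \<Rightarrow> form \<Rightarrow> bool" where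
  "feval w (BIn j) = w ! j"
| "feval w (BNot t) = (\<not> feval w t)"
| "feval w (BAnd ts) = (\<forall>t\<in>set ts. feval w t)"
| "feval w (BOr ts) = (\<exists>t\<in>set ts. feval w t)"

fun fsize :: "form \<Rightarrow> nat" where
  "fsize (BIn j) = 1"
| "fsize (BNot t) = Suc (fsize t)"
| "fsize (BAnd ts) = Suc (sum_list (map fsize ts))"
| "fsize (BOr ts) = Suc (sum_list (map fsize ts))"

fun fdepth :: "form \<Rightarrow> nat" where
  "fdepth (BIn j) = 0"
| "fdepth (BNot t) = Suc (fdepth t)"
| "fdepth (BAnd ts) = Suc (fold max (map fdepth ts) 0)"
| "fdepth (BOr ts) = Suc (fold max (map fdepth ts) 0)"

fun finputs :: "form \<Rightarrow> nat set" where
  "finputs (BIn j) = {j}"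
| "finputs (BNot t) = finputs t"
| "finputs (BAnd ts) = (\<Union>t\<in>set ts. finputs t)"
| "finputs (BOr ts) = (\<Union>t\<in>set ts. finputs t)"

fun postorder :: "form \<Rightarrow> form list" where
  "postorder (BIn j) = [BIn j]"
| "postorder (BNot t) = postorder t @ [BNot t]"
| "postorder (BAnd ts) = concat (map postorder ts) @ [BAnd ts]"
| "postorder (BOr ts) = concat (map postorder ts) @ [BOr ts]"

lemma length_postorder: "length (postorder t) = fsize t"
  by (induction t) (auto simp: length_concat o_def cong: map_cong)

lemma postorder_snoc: "\<exists>P. postorder t = P @ [t]"
  by (cases t) auto

lemma fsize_pos: "0 < fsize t"
  by (cases t) auto

lemma fold_max_le_iff: "fold max xs (a::nat) \<le> b \<longleftrightarrow> a \<le> b \<and> (\<forall>x\<in>set xs. x \<le> b)"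
  by (simp flip: Max.set_eq_fold)

lemma fold_max_ge: "x \<in> set xs \<Longrightarrow> x \<le> fold max xs (a::nat)"
  using fold_max_le_iff by blast

lemma fdepth_postorder: "s \<in> set (postorder t) \<Longrightarrow> fdepth s \<le> fdepth t"
proof (induction t)
  case (BAnd ts)
  show ?case
  proof (cases "s = BAnd ts")
    case False
    then obtain t where "t \<in> set ts" "s \<in> set (postorder t)" using BAnd.prems by auto
    then show ?thesis using BAnd.IH fold_max_ge[of "fdepth t" "map fdepth ts" 0] by force
  qed simp
next
  case (BOr ts)
  show ?case
  proof (cases "s = BOr ts")
    case False
    then obtain t where "t \<in> set ts" "s \<in> set (postorder t)" using BOr.prems by auto
    then show ?thesis using BOr.IH fold_max_ge[of "fdepth t" "map fdepth ts" 0] by force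
  qed simp
qed auto

fun fold_form :: "(nat \<Rightarrow> 'a) \<Rightarrow> ('a \<Rightarrow> 'a) \<Rightarrow> ('a list \<Rightarrow> 'a) \<Rightarrow> ('a list \<Rightarrow> 'a) \<Rightarrow> form \<Rightarrow> 'a" where
  "fold_form i n c d (BIn j) = i j"
| "fold_form i n c d (BNot t) = n (fold_form i n c d t)"
| "fold_form i n c d (BAnd ts) = c (map (fold_form i n c d) ts)"
| "fold_form i n c d (BOr ts) = d (map (fold_form i n c d) ts)"

fun fold_gate ::
  "(nat \<Rightarrow> 'a) \<Rightarrow> ('a \<Rightarrow> 'a) \<Rightarrow> ('a list \<Rightarrow> 'a) \<Rightarrow> ('a list \<Rightarrow> 'a) \<Rightarrow> 'a list \<Rightarrow> gate \<Rightarrow> 'a" where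
  "fold_gate i n c d vs (GIn j) = i j"
| "fold_gate i n c d vs (GNot j) = n (vs ! j)"
| "fold_gate i n c d vs (GAnd js) = c (map ((!) vs) js)"
| "fold_gate i n c d vs (GOr js) = d (map ((!) vs) js)"

lemma feval_eq_fold_form: "feval w = fold_form ((!) w) Not (list_all id) (list_ex id)"
proof
  show "feval w t = fold_form ((!) w) Not (list_all id) (list_ex id) t" for t
    by (induction t) (simp_all add: list_all_iff list_ex_iff)
qed

lemma gval_eq_fold_gate: "gval w = fold_gate ((!) w) Not (list_all id) (list_ex id)"
proof (intro ext)
  show "gval w vs g = fold_gate ((!) w) Not (list_all id) (list_ex id) vs g" for vs g
    by (cases g) (simp_all add: list_all_iff list_ex_iff)
qed

lemma fdepth_eq_fold_form:
  "fdepth = fold_form (\<lambda>_. 0) Suc (\<lambda>ds. Suc (fold max ds 0)) (\<lambda>ds. Suc (fold max ds 0))"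
proof
  show "fdepth t = fold_form (\<lambda>_. 0) Suc (\<lambda>ds. Suc (fold max ds 0)) (\<lambda>ds. Suc (fold max ds 0)) t"
    for t
    by (induction t) (simp_all cong: map_cong)
qed

lemma gdepth_eq_fold_gate:
  "gdepth = fold_gate (\<lambda>_. 0) Suc (\<lambda>ds. Suc (fold max ds 0)) (\<lambda>ds. Suc (fold max ds 0))"
proof (intro ext)
  show "gdepth ds g = fold_gate (\<lambda>_. 0) Suc (\<lambda>ds. Suc (fold max ds 0)) (\<lambda>ds. Suc (fold max ds 0)) ds g"
    for ds g
    by (cases g) simp_all
qed

definition run_gates :: "('a list \<Rightarrow> gate \<Rightarrow> 'a) \<Rightarrow> 'a list \<Rightarrow> gate list \<Rightarrow> 'a list" where
  "run_gates h vs C = foldl (\<lambda>vs g. vs @ [h vs g]) vs C"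

lemma run_gates_append: "run_gates h vs (C @ D) = run_gates h (run_gates h vs C) D"
  by (simp add: run_gates_def)

lemma run_gates_Nil: "run_gates h vs [] = vs"
  by (simp add: run_gates_def)

lemma run_gates_single: "run_gates h vs [g] = vs @ [h vs g]"
  by (simp add: run_gates_def)

text \<open>A formula is compiled in postorder; \<open>b\<close> is the number of gates already present, so
  that the gates of the subformulas can be referred to by absolute indices.\<close>

fun compile :: "nat \<Rightarrow> form \<Rightarrow> gate list"
and compile_list :: "nat \<Rightarrow> form list \<Rightarrow> gate list \<times> nat list" where
  "compile b (BIn j) = [GIn j]"
| "compile b (BNot t) = compile b t @ [GNot (b + fsize t - 1)]"
| "compile b (BAnd ts) = fst (compile_list b ts) @ [GAnd (snd (compile_list b ts))]"
| "compile b (BOr ts) = fst (compile_list b ts) @ [GOr (snd (compile_list b ts))]"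
| "compile_list b [] = ([], [])"
| "compile_list b (t # ts) =
     (compile b t @ fst (compile_list (b + fsize t) ts),
      (b + fsize t - 1) # snd (compile_list (b + fsize t) ts))"

lemma nth_root_postorder: "(vs @ map f (postorder t)) ! (length vs + fsize t - 1) = f t"
proof -
  obtain P where P: "postorder t = P @ [t]" using postorder_snoc by blast
  then have "length vs + fsize t - 1 = length (vs @ map f P)"
    using length_postorder[of t] by simp
  moreover have "vs @ map f (postorder t) = (vs @ map f P) @ [f t]" using P by simp
  ultimately show ?thesis by (metis nth_append_length)
qed

lemma run_gates_compile:
  "length vs = b \<Longrightarrow>
     run_gates (fold_gate i n c d) vs (compile b t) = vs @ map (fold_form i n c d) (postorder t)"
  "length vs = b \<Longrightarrow>
     run_gates (fold_gate i n c d) vs (fst (compile_list b ts))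
       = vs @ map (fold_form i n c d) (concat (map postorder ts)) \<and>
     map ((!) (vs @ map (fold_form i n c d) (concat (map postorder ts)))) (snd (compile_list b ts))
       = map (fold_form i n c d) ts"
proof (induction b t and b ts arbitrary: vs and vs rule: compile_compile_list.induct)
  case (2 b t)
  then show ?case
    using nth_root_postorder[of vs "fold_form i n c d" t]
    by (simp add: run_gates_append run_gates_single)
next
  case (6 b t ts)
  let ?F = "fold_form i n c d"
  have len: "length (vs @ map ?F (postorder t)) = b + fsize t"
    using "6.prems" by (simp add: length_postorder)
  have root: "((vs @ map ?F (postorder t)) @ X) ! (b + fsize t - 1) = ?F t" for X
    using nth_root_postorder[of vs ?F t] "6.prems" len fsize_pos[of t]
    by (simp only: nth_append) simp
  show ?case
    using "6.IH"(1)[OF "6.prems"] "6.IH"(2)[OF len] root by (simp add: run_gates_append)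
qed (simp_all add: run_gates_append run_gates_single run_gates_Nil)

fun gates_ok :: "nat \<Rightarrow> nat \<Rightarrow> gate list \<Rightarrow> bool" where
  "gates_ok m b [] = True"
| "gates_ok m b (g # C) = (gate_ok m b g \<and> gates_ok m (Suc b) C)"

lemma gates_ok_append: "gates_ok m b (C @ D) \<longleftrightarrow> gates_ok m b C \<and> gates_ok m (b + length C) D"
  by (induction C arbitrary: b) auto

lemma gates_ok_iff_nth: "gates_ok m b C \<longleftrightarrow> (\<forall>i<length C. gate_ok m (b + i) (C ! i))"
  by (induction C arbitrary: b) (auto simp: nth_Cons split: nat.split)

lemma length_compile:
  "length (compile b t) = fsize t"
  "length (fst (compile_list b ts)) = sum_list (map fsize ts)"
  by (induction b t and b ts rule: compile_compile_list.induct) auto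

lemma gates_ok_compile:
  "finputs t \<subseteq> {..<m} \<Longrightarrow> gates_ok m b (compile b t)"
  "(\<Union>t\<in>set ts. finputs t) \<subseteq> {..<m} \<Longrightarrow>
     gates_ok m b (fst (compile_list b ts)) \<and>
     (\<forall>p\<in>set (snd (compile_list b ts)). p < b + sum_list (map fsize ts))"
proof (induction b t and b ts rule: compile_compile_list.induct)
  case (2 b t)
  then show ?case using fsize_pos[of t] by (auto simp: gates_ok_append length_compile)
next
  case (6 b t ts)
  then show ?case using fsize_pos[of t] by (auto simp: gates_ok_append length_compile)
qed (auto simp: gates_ok_append length_compile)

lemma wf_circ_compile: "finputs t \<subseteq> {..<m} \<Longrightarrow> wf_circ m (compile 0 t)"
  using gates_ok_compile(1)[of t m 0] length_compile(1)[of 0 t] fsize_pos[of t]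
  by (auto simp: wf_circ_def gates_ok_iff_nth)

lemma circ_out_compile: "circ_out w (compile 0 t) = feval w t"
proof -
  have "run_gates (gval w) [] (compile 0 t) = map (feval w) (postorder t)"
    unfolding gval_eq_fold_gate feval_eq_fold_form using run_gates_compile(1)[of "[]" 0] by simp
  then show ?thesis
    using postorder_snoc[of t] by (auto simp: circ_out_def circ_vals_def run_gates_def)
qed

lemma circ_size_compile: "circ_size (compile 0 t) = fsize t"
  by (simp add: circ_size_def length_compile)

lemma circ_depth_compile: "circ_depth (compile 0 t) \<le> fdepth t"
proof -
  have "run_gates gdepth [] (compile 0 t) = map fdepth (postorder t)"
    unfolding gdepth_eq_fold_gate fdepth_eq_fold_form using run_gates_compile(1)[of "[]" 0] by simp
  then show ?thesis
    by (simp add: circ_depth_def run_gates_def fold_max_le_iff fdepth_postorder)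
qed

lemma fsize_BAnd_le: "(\<forall>t\<in>set ts. fsize t \<le> s) \<Longrightarrow> fsize (BAnd ts) \<le> Suc (length ts * s)"
  by (induction ts) auto

lemma fsize_BOr_le: "(\<forall>t\<in>set ts. fsize t \<le> s) \<Longrightarrow> fsize (BOr ts) \<le> Suc (length ts * s)"
  by (induction ts) auto

lemma fdepth_BAnd_le: "(\<forall>t\<in>set ts. fdepth t \<le> d) \<Longrightarrow> fdepth (BAnd ts) \<le> Suc d"
  by (simp add: fold_max_le_iff)

lemma fdepth_BOr_le: "(\<forall>t\<in>set ts. fdepth t \<le> d) \<Longrightarrow> fdepth (BOr ts) \<le> Suc d"
  by (simp add: fold_max_le_iff)

section \<open>Computable functions\<close>

lemma reval_proj: "i < length xs \<Longrightarrow> xs ! i = y \<Longrightarrow> reval (RProj i) xs y"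
  using reval.proj by blast

definition rec_add :: recf where "rec_add = RPrim (RProj 0) (RComp RSucc [RProj 1])"
definition rec_mult :: recf where "rec_mult = RPrim RZero (RComp rec_add [RProj 1, RProj 2])"
definition rec_power :: recf where
  "rec_power = RPrim (RComp RSucc [RZero]) (RComp rec_mult [RProj 1, RProj 2])"

fun rec_const :: "nat \<Rightarrow> recf" where
  "rec_const 0 = RZero"
| "rec_const (Suc c) = RComp RSucc [rec_const c]"

lemma reval_add: "reval rec_add [x, y] (x + y)"
proof (induction x)
  case 0
  show ?case unfolding rec_add_def by (intro reval.prim0 reval_proj) auto
next
  case (Suc x)
  have "reval (RComp RSucc [RProj 1]) [x, x + y, y] (Suc (x + y))"
    by (rule reval.comp[where ys = "[x + y]"]) (auto intro: reval_proj reval.succ)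
  with Suc show ?case unfolding rec_add_def by (auto intro: reval.primS)
qed

lemma reval_mult: "reval rec_mult [x, y] (x * y)"
proof (induction x)
  case 0
  show ?case unfolding rec_mult_def using reval.zero by (auto intro: reval.prim0)
next
  case (Suc x)
  have "reval (RComp rec_add [RProj 1, RProj 2]) [x, x * y, y] (x * y + y)"
    by (rule reval.comp[where ys = "[x * y, y]"]) (auto intro: reval_proj reval_add)
  with Suc show ?case unfolding rec_mult_def by (auto intro: reval.primS simp: add.commute)
qed

lemma reval_power: "reval rec_power [e, x] (x ^ e)"
proof (induction e)
  case 0
  show ?case unfolding rec_power_def
    by (intro reval.prim0 reval.comp[where ys = "[0]"])
      (auto intro: reval.zero reval.succ[of 0 "[]", simplified])
next
  case (Suc e)
  have "reval (RComp rec_mult [RProj 1, RProj 2]) [e, x ^ e, x] (x ^ e * x)"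
    by (rule reval.comp[where ys = "[x ^ e, x]"]) (auto intro: reval_proj reval_mult)
  with Suc show ?case unfolding rec_power_def by (auto intro: reval.primS simp: mult.commute)
qed

lemma reval_const: "reval (rec_const c) xs c"
proof (induction c)
  case 0
  show ?case by (simp add: reval.zero)
next
  case (Suc c)
  have "reval RSucc [c] (Suc c)" by (rule reval.succ)
  with Suc show ?case by (auto intro: reval.comp[where ys = "[c]"])
qed

lemma computable_const: "computable (\<lambda>_. c)"
  unfolding computable_def using reval_const by blast

lemma computable_id: "computable (\<lambda>n. n)"
  unfolding computable_def by (rule exI[of _ "RProj 0"]) (auto intro: reval_proj)

lemma computable_binop:
  assumes h: "\<And>x y. reval r [x, y] (h x y)" and "computable f" "computable g"
  shows "computable (\<lambda>n. h (f n) (g n))"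
proof -
  obtain rf rg where "\<forall>n. reval rf [n] (f n)" "\<forall>n. reval rg [n] (g n)"
    using assms(2,3) unfolding computable_def by blast
  then have "reval (RComp r [rf, rg]) [n] (h (f n) (g n))" for n
    by (auto intro: reval.comp[where ys = "[f n, g n]"] h)
  then show ?thesis unfolding computable_def by blast
qed

lemmas computable_add = computable_binop[OF reval_add]
lemmas computable_mult = computable_binop[OF reval_mult]

lemma computable_power: "computable f \<Longrightarrow> computable g \<Longrightarrow> computable (\<lambda>n. f n ^ g n)"
  using computable_binop[OF reval_power] .

section \<open>Graph problems decided by formulas over the adjacency matrix\<close>

lemma graph_enc_product: "graph_enc N E = map (\<lambda>p. p \<in> E) (List.product [0..<N] [0..<N])"
  by (simp add: graph_enc_def product_concat_map map_concat o_def)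

lemma length_graph_enc: "length (graph_enc N E) = N * N"
  by (simp add: graph_enc_product)

lemma index_less_square: "i < N \<Longrightarrow> j < N \<Longrightarrow> i * N + j < N * (N::nat)"
proof -
  assume "i < N" "j < N"
  then have "i * N + j < Suc i * N" by simp
  also have "\<dots> \<le> N * N" using \<open>i < N\<close> by (intro mult_le_mono1) simp
  finally show ?thesis .
qed

lemma nth_graph_enc: "i < N \<Longrightarrow> j < N \<Longrightarrow> graph_enc N E ! (i * N + j) \<longleftrightarrow> (i, j) \<in> E"
  using index_less_square[of i N j] by (simp add: graph_enc_product product_nth)

definition graph_dec :: "nat \<Rightarrow> bool list \<Rightarrow> (nat \<times> nat) set" where
  "graph_dec N w = {(i, j). i < N \<and> j < N \<and> w ! (i * N + j)}"

lemma graph_enc_dec: "length w = N * N \<Longrightarrow> graph_enc N (graph_dec N w) = w"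
proof (rule nth_equalityI)
  fix p assume "length w = N * N" "p < length (graph_enc N (graph_dec N w))"
  then have "p < N * N" by (simp add: length_graph_enc)
  moreover from this have "p div N < N" "p mod N < N"
    by (auto simp: less_mult_imp_div_less intro!: mod_less_divisor gr0I)
  ultimately show "graph_enc N (graph_dec N w) ! p = w ! p"
    by (simp add: graph_enc_product product_nth graph_dec_def)
qed (simp add: length_graph_enc)

lemma graph_dec_enc: "E \<subseteq> {0..<N} \<times> {0..<N} \<Longrightarrow> graph_dec N (graph_enc N E) = E"
  by (auto simp: graph_dec_def nth_graph_enc)

definition graph_problem :: "(nat \<Rightarrow> (nat \<times> nat) set \<Rightarrow> nat \<Rightarrow> bool) \<Rightarrow> pproblem" where
  "graph_problem R = {(graph_enc N E, k) | N E k. basic_graph N E \<and> R N E k}"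

lemma mem_graph_problem:
  assumes "length w = N * N"
  shows "(w, k) \<in> graph_problem R \<longleftrightarrow> basic_graph N (graph_dec N w) \<and> R N (graph_dec N w) k"
proof
  assume "(w, k) \<in> graph_problem R"
  then obtain M E where w: "w = graph_enc M E" and E: "basic_graph M E" "R M E k"
    unfolding graph_problem_def by blast
  have "M * M = N * N" using assms w by (simp add: length_graph_enc)
  then have "M = N" by (metis power2_eq_square power2_eq_iff_nonneg zero_le)
  with w E show "basic_graph N (graph_dec N w) \<and> R N (graph_dec N w) k"
    by (simp add: graph_dec_enc basic_graph_def)
next
  assume "basic_graph N (graph_dec N w) \<and> R N (graph_dec N w) k"
  then show "(w, k) \<in> graph_problem R"
    unfolding graph_problem_def using graph_enc_dec[OF assms]
    by (intro CollectI exI[of _ N] exI[of _ "graph_dec N w"] exI[of _ k]) simp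
qed

lemma graph_problem_square_length: "(w, k) \<in> graph_problem R \<Longrightarrow> length w = floor_sqrt (length w) ^ 2"
  by (auto simp: graph_problem_def length_graph_enc power2_eq_square[symmetric])

definition basic_graph_form :: "nat \<Rightarrow> form" where
  "basic_graph_form N = BAnd ([BNot (BIn (i * N + i)). i \<leftarrow> [0..<N]] @
     [BOr [BNot (BIn (i * N + j)), BIn (j * N + i)]. i \<leftarrow> [0..<N], j \<leftarrow> [0..<N]])"

lemma feval_basic_graph_form: "feval w (basic_graph_form N) \<longleftrightarrow> basic_graph N (graph_dec N w)"
proof -
  have "feval w (basic_graph_form N) \<longleftrightarrow>
      (\<forall>i<N. \<not> w ! (i * N + i)) \<and> (\<forall>i<N. \<forall>j<N. w ! (i * N + j) \<longrightarrow> w ! (j * N + i))"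
    by (simp add: basic_graph_form_def ball_Un ball_UN atLeast0LessThan) (simp add: Ball_def)
  moreover have "irrefl (graph_dec N w) \<longleftrightarrow> (\<forall>i<N. \<not> w ! (i * N + i))"
    unfolding irrefl_def graph_dec_def by blast
  moreover have "sym (graph_dec N w) \<longleftrightarrow> (\<forall>i<N. \<forall>j<N. w ! (i * N + j) \<longrightarrow> w ! (j * N + i))"
    unfolding sym_def graph_dec_def by blast
  moreover have "graph_dec N w \<subseteq> {0..<N} \<times> {0..<N}"
    unfolding graph_dec_def by auto
  ultimately show ?thesis unfolding basic_graph_def by blast
qed
lemma fsize_basic_graph_form: "fsize (basic_graph_form N) \<le> 5 * (N + 1) ^ 2"
proof -
  have "fsize (basic_graph_form N) \<le> Suc (length
      ([BNot (BIn (i * N + i)). i \<leftarrow> [0..<N]] @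
       [BOr [BNot (BIn (i * N + j)), BIn (j * N + i)]. i \<leftarrow> [0..<N], j \<leftarrow> [0..<N]]) * 4)"
    unfolding basic_graph_form_def by (rule fsize_BAnd_le) auto
  also have "\<dots> = Suc ((N + N * N) * 4)" by (simp add: length_concat o_def sum_list_triv)
  also have "\<dots> \<le> 5 * (N + 1) ^ 2" by (simp add: power2_eq_square algebra_simps)
  finally show ?thesis .
qed

lemma fdepth_basic_graph_form: "fdepth (basic_graph_form N) \<le> 3"
proof -
  have "fdepth (basic_graph_form N) \<le> Suc 2" unfolding basic_graph_form_def
    by (rule fdepth_BAnd_le) (auto intro: fdepth_BOr_le)
  then show ?thesis by simp
qed

lemma finputs_basic_graph_form: "finputs (basic_graph_form N) \<subseteq> {..<N * N}"
  unfolding basic_graph_form_def using index_less_square by auto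

text \<open>\<open>[GOr []]\<close> is the constant-false circuit; it rejects input lengths that are not squares.\<close>

definition graph_circuit :: "(nat \<Rightarrow> nat \<Rightarrow> form) \<Rightarrow> nat \<Rightarrow> nat \<Rightarrow> gate list" where
  "graph_circuit T n k = (let N = floor_sqrt n in
     if n = N ^ 2 then compile 0 (BAnd [basic_graph_form N, T N k]) else [GOr []])"

lemma graph_circuit_square:
  "graph_circuit T (N * N) k = compile 0 (BAnd [basic_graph_form N, T N k])"
  by (simp add: graph_circuit_def power2_eq_square[symmetric])

lemma graph_circuit_not_square: "n \<noteq> floor_sqrt n ^ 2 \<Longrightarrow> graph_circuit T n k = [GOr []]"
  by (simp add: graph_circuit_def)

lemma square_floor_sqrtE: "n = floor_sqrt n ^ 2 \<Longrightarrow> (\<And>N. n = N * N \<Longrightarrow> thesis) \<Longrightarrow> thesis"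
  by (simp add: power2_eq_square)

lemma wf_circ_graph_circuit:
  assumes "\<And>N k. finputs (T N k) \<subseteq> {..<N * N}"
  shows "wf_circ n (graph_circuit T n k)"
proof (cases "n = floor_sqrt n ^ 2")
  case True
  then obtain N where n: "n = N * N" by (rule square_floor_sqrtE)
  have "finputs (BAnd [basic_graph_form N, T N k]) \<subseteq> {..<N * N}"
    using finputs_basic_graph_form assms by auto
  then show ?thesis unfolding n graph_circuit_square by (rule wf_circ_compile)
qed (simp add: graph_circuit_not_square wf_circ_def)

lemma circ_out_graph_circuit:
  assumes "\<And>N w. length w = N * N \<Longrightarrow> basic_graph N (graph_dec N w) \<Longrightarrow>
             feval w (T N k) \<longleftrightarrow> R N (graph_dec N w) k"
    and "length w = n"
  shows "circ_out w (graph_circuit T n k) \<longleftrightarrow> (w, k) \<in> graph_problem R"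
proof (cases "n = floor_sqrt n ^ 2")
  case True
  then obtain N where n: "n = N * N" by (rule square_floor_sqrtE)
  with assms(2) have w: "length w = N * N" by simp
  have "circ_out w (graph_circuit T n k) \<longleftrightarrow> basic_graph N (graph_dec N w) \<and> feval w (T N k)"
    unfolding n graph_circuit_square circ_out_compile by (simp add: feval_basic_graph_form)
  then show ?thesis using assms(1)[OF w] mem_graph_problem[OF w] by blast
next
  case False
  then show ?thesis using assms(2) graph_problem_square_length
    by (auto simp: graph_circuit_not_square circ_out_def circ_vals_def)
qed

lemma circ_size_graph_circuit:
  assumes "\<And>N. fsize (T N k) \<le> c * (N + 1) ^ 4"
  shows "circ_size (graph_circuit T n k) \<le> (c + 6) * (n + 1) ^ 4"
proof (cases "n = floor_sqrt n ^ 2")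
  case True
  then obtain N where n: "n = N * N" by (rule square_floor_sqrtE)
  have "fsize (BAnd [basic_graph_form N, T N k]) \<le> Suc (5 * (N + 1) ^ 2 + c * (N + 1) ^ 4)"
    using fsize_basic_graph_form[of N] assms[of N] by simp
  also have "\<dots> \<le> (c + 6) * (N + 1) ^ 4"
  proof -
    have "(N + 1) ^ 2 \<le> (N + 1) ^ 4" "1 \<le> (N + 1) ^ 4" by (simp_all add: power_increasing)
    then show ?thesis unfolding distrib_right by linarith
  qed
  also have "\<dots> \<le> (c + 6) * (n + 1) ^ 4" using n by (simp add: power_mono le_square)
  finally show ?thesis unfolding n graph_circuit_square circ_size_compile by simp
qed (simp add: graph_circuit_not_square circ_size_def)

lemma circ_depth_graph_circuit:
  assumes "\<And>N. fdepth (T N k) \<le> d"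
  shows "circ_depth (graph_circuit T n k) \<le> d + 4"
proof (cases "n = floor_sqrt n ^ 2")
  case True
  then obtain N where n: "n = N * N" by (rule square_floor_sqrtE)
  have "fdepth (BAnd [basic_graph_form N, T N k]) \<le> Suc (max 3 d)"
    using fdepth_basic_graph_form[of N] assms[of N] by (intro fdepth_BAnd_le) auto
  then show ?thesis
    using circ_depth_compile[of "BAnd [basic_graph_form N, T N k]"]
    unfolding n graph_circuit_square by linarith
qed (simp add: graph_circuit_not_square circ_depth_def)

lemma paraAC0I:
  assumes "computable f" "\<And>n k. wf_circ n (C n k)"
    and "\<And>n k w. length w = n \<Longrightarrow> circ_out w (C n k) \<longleftrightarrow> (w, k) \<in> Q"
    and "\<And>n k. circ_size (C n k) \<le> f k * (n + 1) ^ c" "\<And>n k. circ_depth (C n k) \<le> d"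
  shows "Q \<in> paraAC0"
  unfolding paraAC0_def decides_family_def using assms by blast

lemma graph_problem_in_paraAC0:
  assumes "computable F"
    and "\<And>N k. finputs (T N k) \<subseteq> {..<N * N}"
    and "\<And>N k. fdepth (T N k) \<le> d"
    and "\<And>N k. fsize (T N k) \<le> F k * (N + 1) ^ 4"
    and "\<And>N k w. length w = N * N \<Longrightarrow> basic_graph N (graph_dec N w) \<Longrightarrow>
           feval w (T N k) \<longleftrightarrow> R N (graph_dec N w) k"
  shows "graph_problem R \<in> paraAC0"
proof (rule paraAC0I[where C = "graph_circuit T" and f = "\<lambda>k. F k + 6" and c = 4 and d = "d + 4"])
  show "computable (\<lambda>k. F k + 6)" by (intro computable_add assms(1) computable_const)
  show "wf_circ n (graph_circuit T n k)" for n k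
    by (rule wf_circ_graph_circuit) (rule assms(2))
  show "circ_out w (graph_circuit T n k) \<longleftrightarrow> (w, k) \<in> graph_problem R" if "length w = n" for n k w
    by (rule circ_out_graph_circuit[OF assms(5) that])
  show "circ_size (graph_circuit T n k) \<le> (F k + 6) * (n + 1) ^ 4" for n k
    by (rule circ_size_graph_circuit) (rule assms(4))
  show "circ_depth (graph_circuit T n k) \<le> d + 4" for n k
    by (rule circ_depth_graph_circuit) (rule assms(3))
qed

lemma static_graph_problem_in_paraAC0: "graph_problem (\<lambda>N E k. P N) \<in> paraAC0"
  by (rule graph_problem_in_paraAC0[where T = "\<lambda>N k. if P N then BAnd [] else BOr []"
        and F = "\<lambda>_. 1" and d = 1]) (auto intro: computable_const)

section \<open>Sentences of the form \<open>\<forall>x \<exists>y \<psi>\<close>\<close>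

text \<open>The value of a quantifier-free formula in the two variables \<open>x\<close>, \<open>y\<close>, given whether
  they denote the same vertex and whether they denote adjacent vertices; the clauses for
  quantifiers are junk.\<close>

fun qf_value :: "bool \<Rightarrow> bool \<Rightarrow> fo \<Rightarrow> bool" where
  "qf_value eq adj (FEq z1 z2) = (z1 = z2 \<or> eq)"
| "qf_value eq adj (FE z1 z2) = (z1 \<noteq> z2 \<and> adj)"
| "qf_value eq adj (FNot p) = (\<not> qf_value eq adj p)"
| "qf_value eq adj (FAnd p q) = (qf_value eq adj p \<and> qf_value eq adj q)"
| "qf_value eq adj (FOr p q) = (qf_value eq adj p \<or> qf_value eq adj q)"
| "qf_value eq adj (FAll z p) = False"
| "qf_value eq adj (FEx z p) = False"

lemma holds_qf_value:
  assumes "qfree \<psi>" "fv \<psi> \<subseteq> {x, y}" "basic_graph N E"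
  shows "holds N E a \<psi> \<longleftrightarrow> qf_value (a x = a y) ((a x, a y) \<in> E) \<psi>"
  using assms(1,2)
proof (induction \<psi>)
  case (FE z1 z2)
  have "sym E" "irrefl E" using assms(3) by (auto simp: basic_graph_def)
  with FE show ?case by (auto simp: sym_def irrefl_def)
qed auto

definition all_partnered :: "bool \<Rightarrow> nat \<Rightarrow> (nat \<times> nat) set \<Rightarrow> bool" where
  "all_partnered b N E \<longleftrightarrow> (\<forall>v<N. \<exists>u<N. u \<noteq> v \<and> ((v, u) \<in> E \<longleftrightarrow> b))"

lemma models_ae_distinct_vars:
  assumes "qfree \<psi>" "fv \<psi> \<subseteq> {x, y}" "x \<noteq> y" "basic_graph N E"
  shows "models N E (FAll x (FEx y \<psi>)) \<longleftrightarrow>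
    (\<forall>v<N. qf_value True False \<psi> \<or> (\<exists>u<N. u \<noteq> v \<and> qf_value False ((v, u) \<in> E) \<psi>))"
proof -
  let ?loop = "qf_value True False \<psi>" and ?val = "\<lambda>adj. qf_value False adj \<psi>"
  have irrefl: "(v, v) \<notin> E" for v using assms(4) by (auto simp: basic_graph_def irrefl_def)
  have "(\<exists>u<N. qf_value (v = u) ((v, u) \<in> E) \<psi>) \<longleftrightarrow>
        ?loop \<or> (\<exists>u<N. u \<noteq> v \<and> ?val ((v, u) \<in> E))" if "v < N" for v
  proof
    assume "\<exists>u<N. qf_value (v = u) ((v, u) \<in> E) \<psi>"
    then obtain u where "u < N" "qf_value (v = u) ((v, u) \<in> E) \<psi>" by blast
    then show "?loop \<or> (\<exists>u<N. u \<noteq> v \<and> ?val ((v, u) \<in> E))"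
      using irrefl by (cases "u = v") auto
  next
    assume "?loop \<or> (\<exists>u<N. u \<noteq> v \<and> ?val ((v, u) \<in> E))"
    then show "\<exists>u<N. qf_value (v = u) ((v, u) \<in> E) \<psi>"
    proof
      assume ?loop
      then show ?thesis using that irrefl by (intro exI[of _ v]) simp
    next
      assume "\<exists>u<N. u \<noteq> v \<and> ?val ((v, u) \<in> E)"
      then obtain u where "u < N" "v \<noteq> u" "?val ((v, u) \<in> E)" by blast
      then show ?thesis by (intro exI[of _ u]) simp
    qed
  qed
  with holds_qf_value[OF assms(1,2,4)] assms(3) show ?thesis by (simp add: models_def)
qed

lemma ae_sentence_cases:
  assumes "ae_sentence \<phi>"
  obtains P where "\<And>N E. basic_graph N E \<Longrightarrow> models N E \<phi> \<longleftrightarrow> P N"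
    | b where "\<And>N E. basic_graph N E \<Longrightarrow> models N E \<phi> \<longleftrightarrow> all_partnered b N E"
proof -
  obtain x y \<psi> where \<phi>: "\<phi> = FAll x (FEx y \<psi>)" and "qfree \<psi>" "fv \<phi> = {}"
    using assms unfolding ae_sentence_def by blast
  then have fv: "fv \<psi> \<subseteq> {x, y}" by auto
  let ?loop = "qf_value True False \<psi>" and ?val = "\<lambda>adj. qf_value False adj \<psi>"
  show thesis
  proof (cases "x = y")
    case True
    have "models N E \<phi> \<longleftrightarrow> (\<forall>v<N. \<exists>u<N. ?loop)" if "basic_graph N E" for N E
      using holds_qf_value[OF \<open>qfree \<psi>\<close> fv that] that True
      by (simp add: \<phi> models_def basic_graph_def irrefl_def)
    then show thesis by (rule that(1))
  next
    case False
    note models = models_ae_distinct_vars[OF \<open>qfree \<psi>\<close> fv False, folded \<phi>]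
    show thesis
    proof (cases "?loop \<or> ?val True = ?val False")
      case True
      then have "\<not> ?loop \<Longrightarrow> ?val adj = ?val True" for adj by (cases adj) auto
      then obtain c where c: "\<And>adj. \<not> ?loop \<Longrightarrow> ?val adj = c" by blast
      have "models N E \<phi> \<longleftrightarrow> (\<forall>v<N. ?loop \<or> (\<exists>u<N. u \<noteq> v \<and> c))"
        if "basic_graph N E" for N E
        using models[OF that] c by (cases ?loop) simp_all
      then show thesis by (rule that(1))
    next
      case False
      then have "?val adj \<longleftrightarrow> (adj \<longleftrightarrow> ?val True)" for adj by (cases adj) auto
      then obtain b where b: "\<And>adj. ?val adj \<longleftrightarrow> (adj \<longleftrightarrow> b)" by blast
      have "models N E \<phi> \<longleftrightarrow> all_partnered b N E" if "basic_graph N E" for N E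
        using models[OF that] False b by (simp add: all_partnered_def)
      then show thesis by (rule that(2))
    qed
  qed
qed

section \<open>Repairing a graph by few edits\<close>

definition unpartnered :: "bool \<Rightarrow> nat \<Rightarrow> (nat \<times> nat) set \<Rightarrow> nat set" where
  "unpartnered b N E = {v. v < N \<and> (\<forall>u<N. u \<noteq> v \<longrightarrow> ((v, u) \<in> E \<longleftrightarrow> \<not> b))}"

lemma all_partnered_iff: "all_partnered b N E \<longleftrightarrow> unpartnered b N E = {}"
  unfolding all_partnered_def unpartnered_def by blast

definition can_create :: "modop \<Rightarrow> bool \<Rightarrow> bool" where
  "can_create m b = (case m of Del \<Rightarrow> \<not> b | Add \<Rightarrow> b | Edit \<Rightarrow> True)"

definition repairable :: "modop \<Rightarrow> bool \<Rightarrow> nat \<Rightarrow> (nat \<times> nat) set \<Rightarrow> nat \<Rightarrow> bool" where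
  "repairable m b N E k \<longleftrightarrow>
     unpartnered b N E = {} \<or> can_create m b \<and> 2 \<le> N \<and> card (unpartnered b N E) \<le> 2 * k"

definition valid_edit :: "modop \<Rightarrow> nat \<Rightarrow> (nat \<times> nat) set \<Rightarrow> nat \<Rightarrow> (nat \<times> nat) set \<Rightarrow> bool" where
  "valid_edit m N E k S \<longleftrightarrow>
     S \<subseteq> {0..<N} \<times> {0..<N} \<and> enorm S \<le> k \<and> op_ok m E S \<and> basic_graph N (sym_diff E S)"

lemma RM_basic_eq:
  "RM_basic m \<phi> = graph_problem (\<lambda>N E k. \<exists>S. valid_edit m N E k S \<and> models N (sym_diff E S) \<phi>)"
  unfolding RM_basic_def graph_problem_def valid_edit_def by (simp add: conj_assoc)

lemma graph_problem_cong:
  "(\<And>N E k. basic_graph N E \<Longrightarrow> R N E k \<longleftrightarrow> R' N E k) \<Longrightarrow> graph_problem R = graph_problem R'"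
  unfolding graph_problem_def by (intro Collect_cong ex_cong1 conj_cong refl)

lemma valid_edit_empty: "basic_graph N E \<Longrightarrow> valid_edit m N E k {}"
  by (simp add: valid_edit_def enorm_def op_ok_def split: modop.split)

lemma card_le_twice_enorm:
  assumes "finite S" "A \<subseteq> (\<Union>(u, v)\<in>S. {u, v})"
  shows "card A \<le> 2 * enorm S"
proof -
  let ?P = "{{u, v} | u v. (u, v) \<in> S}"
  have P: "?P = (\<lambda>(u, v). {u, v}) ` S" by auto
  have "card A \<le> card (\<Union> ?P)"
    using assms by (intro card_mono) (auto simp: P)
  also have "\<dots> \<le> sum card ?P" by (rule card_Union_le_sum_card)
  also have "\<dots> \<le> card ?P * 2"
    using sum_bounded_above[of ?P card 2] by (force simp: card_insert_if)
  finally show ?thesis by (simp add: enorm_def)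
qed

lemma repair_necessary:
  assumes "valid_edit m N E k S" "all_partnered b N (sym_diff E S)"
  shows "repairable m b N E k"
proof (cases "unpartnered b N E = {}")
  case False
  have S: "S \<subseteq> {0..<N} \<times> {0..<N}" "enorm S \<le> k" "op_ok m E S"
    using assms(1) by (auto simp: valid_edit_def)
  have flipped: "\<exists>u. (v, u) \<in> S \<and> u \<noteq> v \<and> ((v, u) \<in> E \<longleftrightarrow> \<not> b)"
    if "v \<in> unpartnered b N E" for v
  proof -
    from that have "v < N" by (simp add: unpartnered_def)
    with assms(2) obtain u where "u < N" "u \<noteq> v" "(v, u) \<in> sym_diff E S \<longleftrightarrow> b"
      unfolding all_partnered_def by blast
    with that show ?thesis unfolding unpartnered_def by blast
  qed
  from False obtain v where "v \<in> unpartnered b N E" by blast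
  with flipped obtain u where "(v, u) \<in> S" "u \<noteq> v" "(v, u) \<in> E \<longleftrightarrow> \<not> b" by blast
  moreover have "v < N" "u < N" using \<open>(v, u) \<in> S\<close> S(1) by auto
  ultimately have "can_create m b" "2 \<le> N"
    using S(3) by (auto simp: can_create_def op_ok_def split: modop.splits)
  moreover have "card (unpartnered b N E) \<le> 2 * enorm S"
    using flipped finite_subset[OF S(1)] by (intro card_le_twice_enorm) auto
  ultimately show ?thesis using S(2) by (simp add: repairable_def)
qed (simp add: repairable_def)

lemma obtain_covering_pairs:
  assumes "finite B" "B \<subseteq> V" "x \<in> V" "y \<in> V" "x \<noteq> y"
  obtains T where "finite T" "card T \<le> (card B + 1) div 2" "B \<subseteq> fst ` T \<union> snd ` T"
    "\<forall>(a, c)\<in>T. a \<in> B \<and> c \<in> V \<and> a \<noteq> c"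
  using assms(1,2)
proof (induction "card B" arbitrary: B thesis rule: less_induct)
  case less
  consider "B = {}" | a where "B = {a}" | a c where "a \<in> B" "c \<in> B" "a \<noteq> c" by blast
  then show ?case
  proof cases
    case 1
    then show ?thesis by (intro less.prems(1)[of "{}"]) simp_all
  next
    case (2 a)
    obtain c where "c \<in> V" "c \<noteq> a" using assms(3-5) by blast
    with 2 less.prems(3) show ?thesis by (intro less.prems(1)[of "{(a, c)}"]) auto
  next
    case (3 a c)
    let ?B = "B - {a, c}"
    have "card {a, c} \<le> card B" using 3 less.prems(2) by (intro card_mono) auto
    then have card: "card ?B + 2 = card B" using 3 less.prems(2) by (simp add: card_Diff_subset)
    from card have "card ?B < card B" by simp
    then obtain T where T: "finite T" "card T \<le> (card ?B + 1) div 2" "?B \<subseteq> fst ` T \<union> snd ` T"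
      "\<forall>(a, c)\<in>T. a \<in> ?B \<and> c \<in> V \<and> a \<noteq> c"
      by (rule less.hyps) (use less.prems(2,3) in auto)
    have "card (insert (a, c) T) \<le> Suc (card T)" using T(1) by (simp add: card_insert_if)
    also have "\<dots> \<le> (card B + 1) div 2" using T(2) card by presburger
    finally have "card (insert (a, c) T) \<le> (card B + 1) div 2" .
    with 3 T less.prems(3) show ?thesis by (intro less.prems(1)[of "insert (a, c) T"]) auto
  qed
qed

lemma enorm_sym_closure_le:
  assumes "finite T"
  shows "enorm (T \<union> T\<inverse>) \<le> card T"
proof -
  have "{{u, v} | u v. (u, v) \<in> T \<union> T\<inverse>} = (\<lambda>(u, v). {u, v}) ` T" by auto
  then show ?thesis unfolding enorm_def using assms by (simp add: card_image_le)
qed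

lemma basic_graph_sym_diff: "basic_graph N E \<Longrightarrow> basic_graph N S \<Longrightarrow> basic_graph N (sym_diff E S)"
  unfolding basic_graph_def sym_def irrefl_def by blast

lemma op_ok_if_can_create: "can_create m b \<Longrightarrow> \<forall>p\<in>S. p \<in> E \<longleftrightarrow> \<not> b \<Longrightarrow> op_ok m E S"
  by (cases m) (auto simp: can_create_def op_ok_def)

lemma all_partnered_sym_diff:
  assumes "\<forall>p\<in>S. p \<in> E \<longleftrightarrow> \<not> b" "basic_graph N S" "\<forall>v\<in>unpartnered b N E. \<exists>u. (v, u) \<in> S"
  shows "all_partnered b N (sym_diff E S)"
  unfolding all_partnered_def
proof (intro allI impI)
  fix v assume "v < N"
  show "\<exists>u<N. u \<noteq> v \<and> ((v, u) \<in> sym_diff E S \<longleftrightarrow> b)"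
  proof (cases "v \<in> unpartnered b N E")
    case True
    with assms(3) obtain u where "(v, u) \<in> S" by blast
    with assms(1,2) show ?thesis by (intro exI[of _ u]) (auto simp: basic_graph_def irrefl_def)
  next
    case False
    with \<open>v < N\<close> obtain u where "u < N" "u \<noteq> v" "(v, u) \<in> E \<longleftrightarrow> b"
      by (auto simp: unpartnered_def)
    with assms(1) show ?thesis by blast
  qed
qed

lemma repair_sufficient:
  assumes "basic_graph N E" "repairable m b N E k"
  obtains S where "valid_edit m N E k S" "all_partnered b N (sym_diff E S)"
proof (cases "unpartnered b N E = {}")
  case True
  with assms(1) show thesis
    by (intro that[of "{}"]) (simp_all add: valid_edit_empty all_partnered_iff)
next
  case False
  let ?B = "unpartnered b N E"
  from False assms(2) have "can_create m b" "2 \<le> N" "card ?B \<le> 2 * k"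
    by (auto simp: repairable_def)
  have "finite ?B" "?B \<subseteq> {..<N}" by (auto simp: unpartnered_def)
  obtain T where T: "finite T" "card T \<le> (card ?B + 1) div 2"
    "?B \<subseteq> fst ` T \<union> snd ` T" "\<forall>(a, c)\<in>T. a \<in> ?B \<and> c \<in> {..<N} \<and> a \<noteq> c"
    by (rule obtain_covering_pairs[of ?B "{..<N}" 0 1])
      (use \<open>2 \<le> N\<close> \<open>finite ?B\<close> \<open>?B \<subseteq> {..<N}\<close> in auto)
  define S where "S = T \<union> T\<inverse>"
  have "(a, c) \<in> E \<longleftrightarrow> \<not> b" "(c, a) \<in> E \<longleftrightarrow> \<not> b" if "(a, c) \<in> T" for a c
  proof -
    from that T(4) have "a \<in> ?B" "c < N" "a \<noteq> c" by auto
    then show "(a, c) \<in> E \<longleftrightarrow> \<not> b" by (auto simp: unpartnered_def)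
    moreover have "sym E" using assms(1) by (simp add: basic_graph_def)
    ultimately show "(c, a) \<in> E \<longleftrightarrow> \<not> b" by (auto simp: sym_def)
  qed
  then have flip: "\<forall>p\<in>S. p \<in> E \<longleftrightarrow> \<not> b" unfolding S_def by auto
  have "S \<subseteq> {0..<N} \<times> {0..<N}" "sym S" "irrefl S"
    using T(4) unfolding S_def unpartnered_def sym_def irrefl_def by auto
  then have S: "basic_graph N S" by (simp add: basic_graph_def)
  have "enorm S \<le> k"
    using enorm_sym_closure_le[OF T(1)] T(2) \<open>card ?B \<le> 2 * k\<close> unfolding S_def by linarith
  with S \<open>S \<subseteq> {0..<N} \<times> {0..<N}\<close> assms(1) flip \<open>can_create m b\<close> have "valid_edit m N E k S"
    by (simp add: valid_edit_def basic_graph_sym_diff op_ok_if_can_create)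
  moreover have "\<forall>v\<in>?B. \<exists>u. (v, u) \<in> S" using T(3) unfolding S_def by force
  with flip S have "all_partnered b N (sym_diff E S)" by (rule all_partnered_sym_diff)
  ultimately show thesis by (rule that)
qed

lemma RM_basic_static:
  assumes "\<And>N E. basic_graph N E \<Longrightarrow> models N E \<phi> \<longleftrightarrow> P N"
  shows "RM_basic m \<phi> = graph_problem (\<lambda>N E k. P N)"
  unfolding RM_basic_eq
proof (rule graph_problem_cong)
  fix N E k assume E: "basic_graph N E"
  show "(\<exists>S. valid_edit m N E k S \<and> models N (sym_diff E S) \<phi>) \<longleftrightarrow> P N"
  proof
    assume "\<exists>S. valid_edit m N E k S \<and> models N (sym_diff E S) \<phi>"
    then obtain S where "basic_graph N (sym_diff E S)" "models N (sym_diff E S) \<phi>"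
      by (auto simp: valid_edit_def)
    then show "P N" using assms[of N "sym_diff E S"] by simp
  next
    assume "P N"
    then show "\<exists>S. valid_edit m N E k S \<and> models N (sym_diff E S) \<phi>"
      using valid_edit_empty[OF E] assms[OF E] by (intro exI[of _ "{}"]) simp
  qed
qed

lemma RM_basic_partnered:
  assumes "\<And>N E. basic_graph N E \<Longrightarrow> models N E \<phi> \<longleftrightarrow> all_partnered b N E"
  shows "RM_basic m \<phi> = graph_problem (repairable m b)"
  unfolding RM_basic_eq
proof (rule graph_problem_cong)
  fix N E k assume E: "basic_graph N E"
  have models: "models N (sym_diff E S) \<phi> \<longleftrightarrow> all_partnered b N (sym_diff E S)"
    if "valid_edit m N E k S" for S
    using that assms by (simp add: valid_edit_def)
  show "(\<exists>S. valid_edit m N E k S \<and> models N (sym_diff E S) \<phi>) \<longleftrightarrow> repairable m b N E k"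
  proof
    assume "\<exists>S. valid_edit m N E k S \<and> models N (sym_diff E S) \<phi>"
    then obtain S where "valid_edit m N E k S" "models N (sym_diff E S) \<phi>" by blast
    with models show "repairable m b N E k" by (blast intro: repair_necessary)
  next
    assume "repairable m b N E k"
    with E obtain S where "valid_edit m N E k S" "all_partnered b N (sym_diff E S)"
      by (rule repair_sufficient)
    with models show "\<exists>S. valid_edit m N E k S \<and> models N (sym_diff E S) \<phi>" by blast
  qed
qed

section \<open>Threshold formulas\<close>

lemma ex_bit_differs:
  fixes u v :: nat
  assumes "u < 2 ^ L" "v < 2 ^ L" "u \<noteq> v"
  shows "\<exists>p<L. bit u p \<noteq> bit v p"
proof -
  from \<open>u \<noteq> v\<close> obtain p where p: "bit u p \<noteq> bit v p" using bit_eq_iff by blast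
  have "bit x p \<longleftrightarrow> p < L \<and> bit x p" if "x < 2 ^ L" for x :: nat
    using that bit_take_bit_iff[of L x p] take_bit_nat_eq_self_iff[of L x] by simp
  with p assms(1,2) show ?thesis by metis
qed

definition bit_pattern :: "nat list \<Rightarrow> nat \<Rightarrow> bool list" where
  "bit_pattern P v = map (bit v) P"

lemma ex_separating_positions:
  fixes Z :: "nat set"
  assumes "finite Z" "\<forall>v\<in>Z. v < 2 ^ L"
  shows "\<exists>P. length P = card Z * card Z \<and> set P \<subseteq> {..<Suc L} \<and> inj_on (bit_pattern P) Z"
proof -
  \<comment> \<open>position \<open>0\<close> is a dummy for the diagonal pairs, hence the bound \<open>Suc L\<close>\<close>
  define sep :: "nat \<times> nat \<Rightarrow> nat"
    where "sep = (\<lambda>(u, v). if u = v then 0 else SOME p. p < L \<and> bit u p \<noteq> bit v p)"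
  define vs where "vs = sorted_list_of_set Z"
  define P where "P = map sep (List.product vs vs)"
  have sep: "sep (u, v) < L \<and> bit u (sep (u, v)) \<noteq> bit v (sep (u, v))"
    if "u \<in> Z" "v \<in> Z" "u \<noteq> v" for u v
    using someI_ex[OF ex_bit_differs[of u L v]] that assms(2) by (simp add: sep_def)
  have "set P \<subseteq> {..<Suc L}"
    using sep by (fastforce simp: P_def vs_def assms(1) sep_def)
  moreover have "inj_on (bit_pattern P) Z"
  proof (rule inj_onI, rule ccontr)
    fix u v assume "u \<in> Z" "v \<in> Z" "bit_pattern P u = bit_pattern P v" "u \<noteq> v"
    moreover have "sep (u, v) \<in> set P" using \<open>u \<in> Z\<close> \<open>v \<in> Z\<close> by (simp add: P_def vs_def assms(1))
    ultimately show False using sep[of u v] by (auto simp: bit_pattern_def map_eq_conv)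
  qed
  moreover have "length P = card Z * card Z" by (simp add: P_def vs_def)
  ultimately show ?thesis by blast
qed

text \<open>Colour coding by bit patterns: \<open>t\<close> distinct numbers below \<open>N\<close> are told apart by their
  bits at \<open>t * t\<close> suitable positions, so at least \<open>t\<close> of the \<open>T v\<close> hold iff for some choice of
  positions \<open>t\<close> distinct patterns are each realised by some \<open>v\<close> with \<open>T v\<close>.  Since the
  positions are below \<open>floorlog 2 N\<close>, there are few choices.\<close>

definition pattern_witness :: "nat \<Rightarrow> (nat \<Rightarrow> form) \<Rightarrow> nat list \<Rightarrow> bool list \<Rightarrow> form" where
  "pattern_witness N T P q = BOr (map T (filter (\<lambda>v. bit_pattern P v = q) [0..<N]))"

definition distinct_patterns :: "nat \<Rightarrow> bool list list list" where
  "distinct_patterns t = filter distinct (List.n_lists t (List.n_lists (t * t) [True, False]))"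

definition threshold_form :: "nat \<Rightarrow> nat \<Rightarrow> (nat \<Rightarrow> form) \<Rightarrow> form" where
  "threshold_form t N T = BOr
     [BOr [BAnd (map (pattern_witness N T P) qs). qs \<leftarrow> distinct_patterns t].
      P \<leftarrow> List.n_lists (t * t) [0..<Suc (floorlog 2 N)]]"

lemma feval_threshold_form:
  "feval w (threshold_form t N T) \<longleftrightarrow> t \<le> card {v. v < N \<and> feval w (T v)}"
proof
  assume "feval w (threshold_form t N T)"
  then obtain P qs where qs: "qs \<in> set (List.n_lists t (List.n_lists (t * t) [True, False]))"
    "distinct qs" and realised: "\<forall>q\<in>set qs. \<exists>v<N. bit_pattern P v = q \<and> feval w (T v)"
    unfolding threshold_form_def pattern_witness_def distinct_patterns_def
    by (simp add: Bex_def) blast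
  then obtain sel
    where sel: "\<forall>q\<in>set qs. sel q < N \<and> bit_pattern P (sel q) = q \<and> feval w (T (sel q))"
    by metis
  then have "inj_on sel (set qs)" by (metis inj_onI)
  then have "t = card (sel ` set qs)"
    using qs by (simp add: card_image distinct_card length_n_lists_elem)
  also have "\<dots> \<le> card {v. v < N \<and> feval w (T v)}"
    using sel by (intro card_mono) auto
  finally show "t \<le> card {v. v < N \<and> feval w (T v)}" .
next
  assume "t \<le> card {v. v < N \<and> feval w (T v)}"
  then obtain Z where Z: "Z \<subseteq> {v. v < N \<and> feval w (T v)}" "card Z = t" "finite Z"
    by (meson obtain_subset_with_card_n)
  have "v < 2 ^ floorlog 2 N" if "v < N" for v
    using that floorlog_leD[of 2 N "floorlog 2 N"] by simp
  with Z obtain P where P: "length P = t * t" "set P \<subseteq> {..<Suc (floorlog 2 N)}"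
    "inj_on (bit_pattern P) Z"
    using ex_separating_positions[of Z "floorlog 2 N"] by auto
  define qs where "qs = map (bit_pattern P) (sorted_list_of_set Z)"
  have "P \<in> set (List.n_lists (t * t) [0..<Suc (floorlog 2 N)])"
    using P by (auto simp: set_n_lists)
  moreover have "qs \<in> set (distinct_patterns t)"
    using P Z by (auto simp: qs_def distinct_patterns_def set_n_lists bit_pattern_def distinct_map)
  moreover have "\<forall>q\<in>set qs. \<exists>v<N. bit_pattern P v = q \<and> feval w (T v)"
    using Z by (auto simp: qs_def)
  ultimately show "feval w (threshold_form t N T)"
    unfolding threshold_form_def pattern_witness_def by (simp add: Bex_def) blast
qed

lemma fdepth_threshold_form:
  assumes "\<forall>v<N. fdepth (T v) \<le> d"
  shows "fdepth (threshold_form t N T) \<le> d + 4"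
proof -
  have "fdepth (pattern_witness N T P q) \<le> Suc d" for P q
    unfolding pattern_witness_def using assms by (intro fdepth_BOr_le) auto
  then have "fdepth (BAnd (map (pattern_witness N T P) qs)) \<le> Suc (Suc d)" for P qs
    by (intro fdepth_BAnd_le) auto
  then have "fdepth (BOr [BAnd (map (pattern_witness N T P) qs). qs \<leftarrow> Qs]) \<le> Suc (Suc (Suc d))"
    for P Qs by (intro fdepth_BOr_le) auto
  then have "fdepth (threshold_form t N T) \<le> Suc (Suc (Suc (Suc d)))"
    unfolding threshold_form_def by (intro fdepth_BOr_le) auto
  then show ?thesis by simp
qed

lemma finputs_threshold_form:
  "\<forall>v<N. finputs (T v) \<subseteq> A \<Longrightarrow> finputs (threshold_form t N T) \<subseteq> A"
  unfolding threshold_form_def pattern_witness_def by auto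

lemma power_le_exp_bound: "(x::nat) ^ m \<le> m ^ m * 3 ^ x"
proof (cases "m = 0")
  case False
  have "real x / real m \<le> exp (real x / real m)"
    using exp_ge_add_one_self[of "real x / real m"] by linarith
  then have "(real x / real m) ^ m \<le> exp (real x / real m) ^ m"
    by (rule power_mono) simp
  also have "\<dots> = exp 1 ^ x"
    using False by (simp add: exp_divide_power_eq flip: exp_of_nat_mult)
  also have "\<dots> \<le> 3 ^ x" by (rule power_mono) (use exp_le in auto)
  finally have bound: "(real x / real m) ^ m \<le> 3 ^ x" .
  have "real (x ^ m) = real m ^ m * (real x / real m) ^ m"
    using False by (simp add: power_divide)
  also have "\<dots> \<le> real m ^ m * 3 ^ x" using bound by (simp add: mult_left_mono)
  also have "\<dots> = real (m ^ m * 3 ^ x)" by simp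
  finally show ?thesis by (simp only: of_nat_le_iff)
qed simp

lemma floorlog_power_bound: "Suc (floorlog 2 N) ^ m + 1 \<le> 17 * m ^ m * (N + 1) ^ 2"
proof -
  let ?L = "floorlog 2 N"
  have "2 ^ ?L \<le> 2 * (N + 1)"
  proof (cases "N = 0")
    case True
    then show ?thesis by (simp add: floorlog_def)
  next
    case False
    then have "2 ^ (?L - 1) \<le> N" "0 < ?L"
      using floorlog_bounds[of N 2] by (auto simp: floorlog_def)
    moreover from \<open>0 < ?L\<close> have "(2::nat) ^ ?L = 2 * 2 ^ (?L - 1)" by (cases ?L) simp_all
    ultimately show ?thesis by simp
  qed
  then have "2 ^ ?L * 2 ^ ?L \<le> (2 * (N + 1)) * (2 * (N + 1))" using mult_le_mono by blast
  moreover have "(4::nat) ^ ?L = 2 ^ ?L * 2 ^ ?L" by (simp flip: power_mult_distrib)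
  ultimately have four: "4 ^ ?L \<le> 4 * (N + 1) ^ 2" by (simp add: power2_eq_square)
  have "Suc ?L ^ m \<le> m ^ m * 3 ^ Suc ?L" by (rule power_le_exp_bound)
  also have "\<dots> \<le> m ^ m * 4 ^ Suc ?L" by (intro mult_left_mono power_mono) auto
  also have "\<dots> \<le> 16 * (m ^ m * (N + 1) ^ 2)" using four by simp
  finally have "Suc ?L ^ m \<le> 16 * (m ^ m * (N + 1) ^ 2)" .
  moreover have "1 \<le> m ^ m * (N + 1) ^ 2" by (cases "m = 0") auto
  ultimately show ?thesis by (simp only: mult.assoc)
qed

lemma Suc_mult_le: "a \<le> a' \<Longrightarrow> X \<le> X' \<Longrightarrow> 1 \<le> X' \<Longrightarrow> Suc (a * X) \<le> (a' + 1) * (X' :: nat)"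
  using mult_le_mono[of a a' X X'] by simp

definition threshold_factor :: "nat \<Rightarrow> nat" where
  "threshold_factor t = 17 * (t * t) ^ (t * t) * ((2 ^ (t * t)) ^ t + 1) * (t + 1)"

lemma fsize_pattern_witness:
  assumes "\<forall>v<N. fsize (T v) \<le> s" "1 \<le> s"
  shows "fsize (pattern_witness N T P q) \<le> (N + 1) * s"
proof -
  have "fsize (pattern_witness N T P q)
      \<le> Suc (length (filter (\<lambda>v. bit_pattern P v = q) [0..<N]) * s)"
    using fsize_BOr_le[of "map T (filter (\<lambda>v. bit_pattern P v = q) [0..<N])" s] assms(1)
    by (simp add: pattern_witness_def)
  also have "\<dots> \<le> (N + 1) * s"
    using Suc_mult_le[OF length_filter_le[of _ "[0..<N]"] order_refl assms(2)] by simp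
  finally show ?thesis .
qed

lemma length_distinct_patterns: "length (distinct_patterns t) \<le> (2 ^ (t * t)) ^ t"
  using length_filter_le[of distinct "List.n_lists t (List.n_lists (t * t) [True, False])"]
  by (simp add: distinct_patterns_def length_n_lists numeral_2_eq_2)

lemma fsize_threshold_form:
  assumes "\<forall>v<N. fsize (T v) \<le> s" "1 \<le> s"
  shows "fsize (threshold_form t N T) \<le> threshold_factor t * (N + 1) ^ 3 * s"
proof -
  let ?m = "t * t" and ?L = "floorlog 2 N"
  let ?a = "(t + 1) * ((N + 1) * s)" and ?b = "((2 ^ ?m) ^ t + 1) * ((t + 1) * ((N + 1) * s))"
  define hit_all where "hit_all P qs = BAnd (map (pattern_witness N T P) qs)" for P qs
  define hit_some where "hit_some P = BOr (map (hit_all P) (distinct_patterns t))" for P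
  have hit_all: "fsize (hit_all P qs) \<le> ?a" if "length qs = t" for P qs
  proof -
    have "fsize (hit_all P qs) \<le> Suc (length qs * ((N + 1) * s))"
      using fsize_BAnd_le[of "map (pattern_witness N T P) qs" "(N + 1) * s"]
        fsize_pattern_witness[OF assms] by (simp add: hit_all_def)
    also have "\<dots> \<le> ?a" using that assms(2) by (intro Suc_mult_le) auto
    finally show ?thesis .
  qed
  have hit_some: "fsize (hit_some P) \<le> ?b" for P
  proof -
    have "\<forall>x\<in>set (map (hit_all P) (distinct_patterns t)). fsize x \<le> ?a"
      using hit_all by (auto simp: distinct_patterns_def length_n_lists_elem)
    then have "fsize (hit_some P) \<le> Suc (length (distinct_patterns t) * ?a)"
      using fsize_BOr_le by (fastforce simp: hit_some_def)
    also have "\<dots> \<le> ?b"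
      using length_distinct_patterns assms(2) by (intro Suc_mult_le) auto
    finally show ?thesis .
  qed
  have "threshold_form t N T = BOr (map hit_some (List.n_lists ?m [0..<Suc ?L]))"
    by (simp add: threshold_form_def hit_some_def hit_all_def)
  then have "fsize (threshold_form t N T) \<le> Suc (Suc ?L ^ ?m * ?b)"
    using fsize_BOr_le[of "map hit_some (List.n_lists ?m [0..<Suc ?L])"] hit_some
    by (simp add: length_n_lists)
  also have "\<dots> \<le> (Suc ?L ^ ?m + 1) * ?b"
    using assms(2) by (intro Suc_mult_le) auto
  also have "\<dots> \<le> 17 * ?m ^ ?m * (N + 1) ^ 2 * ?b"
    using floorlog_power_bound[of N ?m] by (rule mult_right_mono) simp
  also have "\<dots> = threshold_factor t * (N + 1) ^ 3 * s"
    unfolding threshold_factor_def power2_eq_square power3_eq_cube by (simp only: ac_simps)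
  finally show ?thesis .
qed

definition unpartnered_form :: "bool \<Rightarrow> nat \<Rightarrow> nat \<Rightarrow> form" where
  "unpartnered_form b N v =
     BAnd [if b then BNot (BIn (v * N + u)) else BIn (v * N + u). u \<leftarrow> filter (\<lambda>u. u \<noteq> v) [0..<N]]"

lemma feval_unpartnered_form:
  "v < N \<Longrightarrow> feval w (unpartnered_form b N v) \<longleftrightarrow> v \<in> unpartnered b N (graph_dec N w)"
  by (cases b) (auto simp: unpartnered_form_def unpartnered_def graph_dec_def)

lemma fsize_unpartnered_form: "fsize (unpartnered_form b N v) \<le> 2 * (N + 1)"
proof -
  have "fsize (unpartnered_form b N v) \<le> Suc (length (filter (\<lambda>u. u \<noteq> v) [0..<N]) * 2)"
    using fsize_BAnd_le[of "map _ (filter (\<lambda>u. u \<noteq> v) [0..<N])" 2]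
    unfolding unpartnered_form_def by fastforce
  also have "\<dots> \<le> 2 * (N + 1)" using length_filter_le[of "\<lambda>u. u \<noteq> v" "[0..<N]"] by simp
  finally show ?thesis .
qed

lemma fdepth_unpartnered_form: "fdepth (unpartnered_form b N v) \<le> 2"
proof -
  have "fdepth (unpartnered_form b N v) \<le> Suc 1"
    unfolding unpartnered_form_def by (rule fdepth_BAnd_le) auto
  then show ?thesis by simp
qed

lemma finputs_unpartnered_form: "v < N \<Longrightarrow> finputs (unpartnered_form b N v) \<subseteq> {..<N * N}"
  unfolding unpartnered_form_def using index_less_square by auto

definition repair_form :: "modop \<Rightarrow> bool \<Rightarrow> nat \<Rightarrow> nat \<Rightarrow> form" where
  "repair_form m b N k = BOr
     [BNot (BOr (map (unpartnered_form b N) [0..<N])),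
      if can_create m b \<and> 2 \<le> N then BNot (threshold_form (2 * k + 1) N (unpartnered_form b N))
      else BOr []]"

lemma feval_repair_form: "feval w (repair_form m b N k) \<longleftrightarrow> repairable m b N (graph_dec N w) k"
proof -
  let ?B = "unpartnered b N (graph_dec N w)"
  have B: "{v. v < N \<and> feval w (unpartnered_form b N v)} = ?B"
    using feval_unpartnered_form by (auto simp: unpartnered_def)
  then have "feval w (BOr (map (unpartnered_form b N) [0..<N])) \<longleftrightarrow> ?B \<noteq> {}" by force
  moreover have "feval w (threshold_form (2 * k + 1) N (unpartnered_form b N)) \<longleftrightarrow> 2 * k < card ?B"
    by (simp add: feval_threshold_form B Suc_le_eq)
  ultimately show ?thesis by (auto simp: repair_form_def repairable_def)
qed

lemma fsize_repair_form:
  "fsize (repair_form m b N k) \<le> (2 * threshold_factor (2 * k + 1) + 5) * (N + 1) ^ 4"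
proof -
  let ?X = "(N + 1) ^ 4" and ?c = "threshold_factor (2 * k + 1)"
  have part: "\<forall>v<N. fsize (unpartnered_form b N v) \<le> 2 * (N + 1)"
    using fsize_unpartnered_form by blast
  have "fsize (BOr (map (unpartnered_form b N) [0..<N])) \<le> Suc (N * (2 * (N + 1)))"
    using fsize_BOr_le[of "map (unpartnered_form b N) [0..<N]" "2 * (N + 1)"] part by simp
  also have "\<dots> \<le> 2 * ?X"
  proof -
    have "(N + 1) ^ 2 \<le> ?X" by (simp add: power_increasing)
    then show ?thesis by (simp add: power2_eq_square algebra_simps)
  qed
  finally have all: "fsize (BOr (map (unpartnered_form b N) [0..<N])) \<le> 2 * ?X" .
  have "fsize (threshold_form (2 * k + 1) N (unpartnered_form b N))
      \<le> ?c * (N + 1) ^ 3 * (2 * (N + 1))"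
    by (rule fsize_threshold_form[OF part]) simp
  also have "\<dots> = 2 * ?c * ?X" unfolding power3_eq_cube power4_eq_xxxx by (simp only: ac_simps)
  finally have threshold:
    "fsize (threshold_form (2 * k + 1) N (unpartnered_form b N)) \<le> 2 * ?c * ?X" .
  have "fsize (repair_form m b N k) \<le> 3 + fsize (BOr (map (unpartnered_form b N) [0..<N]))
      + fsize (threshold_form (2 * k + 1) N (unpartnered_form b N))"
    by (simp add: repair_form_def)
  moreover have "1 \<le> ?X" by simp
  ultimately show ?thesis using all threshold unfolding distrib_right by linarith
qed

lemma fdepth_repair_form: "fdepth (repair_form m b N k) \<le> 8"
proof -
  have "fdepth (BOr (map (unpartnered_form b N) [0..<N])) \<le> Suc 2"
    using fdepth_unpartnered_form by (intro fdepth_BOr_le) auto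
  moreover have "fdepth (threshold_form (2 * k + 1) N (unpartnered_form b N)) \<le> 2 + 4"
    using fdepth_unpartnered_form by (intro fdepth_threshold_form) auto
  ultimately have "fdepth (repair_form m b N k) \<le> Suc 7"
    unfolding repair_form_def by (intro fdepth_BOr_le) auto
  then show ?thesis by simp
qed

lemma repair_graph_problem_in_paraAC0: "graph_problem (repairable m b) \<in> paraAC0"
proof (rule graph_problem_in_paraAC0[where T = "repair_form m b" and d = 8
    and F = "\<lambda>k. 2 * threshold_factor (2 * k + 1) + 5"])
  show "computable (\<lambda>k. 2 * threshold_factor (2 * k + 1) + 5)"
    unfolding threshold_factor_def
    by (intro computable_add computable_mult computable_power computable_const computable_id)
  show "finputs (repair_form m b N k) \<subseteq> {..<N * N}" for N k
  proof -
    have "\<forall>v<N. finputs (unpartnered_form b N v) \<subseteq> {..<N * N}"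
      using finputs_unpartnered_form by blast
    then show ?thesis using finputs_threshold_form[of N] by (auto simp: repair_form_def)
  qed
qed (rule fdepth_repair_form fsize_repair_form feval_repair_form)+

lemma RM_basic_ae_in_paraAC0:
  assumes "ae_sentence \<phi>"
  shows "RM_basic m \<phi> \<in> paraAC0"
  using assms
proof (cases rule: ae_sentence_cases)
  case (1 P)
  then show ?thesis by (simp add: RM_basic_static static_graph_problem_in_paraAC0)
next
  case (2 b)
  then show ?thesis by (simp add: RM_basic_partnered repair_graph_problem_in_paraAC0)
qed

lemma paraAC0_subset_paraAC0up: "paraAC0 \<subseteq> paraAC0up"
  unfolding paraAC0_def paraAC0up_def using computable_const by blast

theorem lemma3p5:
  shows "\<forall>m \<in> {Del, Add, Edit}. RM_basic_ae m \<subseteq> paraAC0 \<and> paraAC0 \<subseteq> paraAC0up"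
  using RM_basic_ae_in_paraAC0 paraAC0_subset_paraAC0up by (auto simp: RM_basic_ae_def)

end
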